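(* Suppose $X$ is spike-free. Let $(W_1,w_2,\lambda)$ be a KKT point (B-subdifferential sense) of the non-convex max-margin problem, and suppose it contains two neurons $i_+,i_-$ with $w_{2,i_\pm}\ne0$ whose associated diagonal matrices satisfy $\hat D_{i_+}\ge\mathrm{diag}(\mathbb I(y=1))$ and $\hat D_{i_-}\ge\mathrm{diag}(\mathbb I(y=-1))$. Then $\lambda$ is dual feasible, i.e. $\max_{u:\|u\|_2\le1}|\lambda^T(Xu)_+|\le1$.
   Context: Binary setting: $X\in\mathbb R^{N\times d}$ rows $x_n$, $y\in\{\pm1\}^N$, $Y=\mathrm{diag}(y)$. $X$ is spike-free if for every $u$ with $\|u\|_2\le1$ there is $z$ with $\|z\|_2\le1$ and $(Xu)_+=Xz$. Non-convex max-margin problem: $\min\frac12(\|W_1\|_F^2+\|w_2\|_2^2)$ s.t. $Y(XW_1)_+w_2\ge\mathbf 1$. KKT point (B-subdifferential): $Y\lambda\ge0$, primal feasibility, $\lambda_n(y_n(x_n^TW_1)_+w_2-1)=0$, $w_2=(XW_1)_+^T\lambda$, and for each $i$, $w_{1,i}=w_{2,i}X^T\hat D_i\lambda$ where $\hat D_i$ is diagonal with $(\hat D_i)_{nn}=1$ if $x_n^Tw_{1,i}>0$, $0$ if $x_n^Tw_{1,i}<0$, $\in\{0,1\}$ if $x_n^Tw_{1,i}=0$. *)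

theory Defs
  imports "HOL-Analysis.Analysis"
begin

text \<open>Samples indexed by finite type 'n (N = CARD('n)), features by 'd, neurons by 'm.
  X :: real^'d^'n has rows x_n = X $ n. W1 :: real^'m^'d, its i-th column w_{1,i} = column i W1.\<close>

definition relu_vec :: "real^'k \<Rightarrow> real^'k" where
  "relu_vec v = (\<chi> k. max 0 (v $ k))"

definition relu_mat :: "real^'j^'k \<Rightarrow> real^'j^'k" where
  "relu_mat A = (\<chi> k j. max 0 (A $ k $ j))"

definition spike_free :: "real^'d^'n \<Rightarrow> bool" where
  "spike_free X \<longleftrightarrow>
     (\<forall>u. norm u \<le> 1 \<longrightarrow> (\<exists>z. norm z \<le> 1 \<and> relu_vec (X *v u) = X *v z))"

text \<open>Diagonal matrices \<open>\<hat>D_i\<close> are represented by their diagonals \<open>D i :: 'n \<Rightarrow> real\<close>.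
  B-subdifferential KKT point of  min 1/2(||W1||_F^2 + ||w2||^2)  s.t.  Y (X W1)_+ w2 \<ge> 1,
  with the diagonal matrices D i witnessing the stationarity condition for W1.\<close>

definition KKT_point ::
  "real^'d^'n \<Rightarrow> ('n \<Rightarrow> real) \<Rightarrow> real^'m^'d \<Rightarrow> real^'m \<Rightarrow> real^'n \<Rightarrow> ('m \<Rightarrow> 'n \<Rightarrow> real) \<Rightarrow> bool"
  where
  "KKT_point X y W1 w2 lam D \<longleftrightarrow>
     (\<forall>n. y n * lam $ n \<ge> 0) \<and>
     (\<forall>n. y n * (relu_mat (X ** W1) $ n \<bullet> w2) \<ge> 1) \<and>
     (\<forall>n. lam $ n * (y n * (relu_mat (X ** W1) $ n \<bullet> w2) - 1) = 0) \<and>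
     w2 = transpose (relu_mat (X ** W1)) *v lam \<and>
     (\<forall>i n. (X $ n \<bullet> column i W1 > 0 \<longrightarrow> D i n = 1) \<and>
            (X $ n \<bullet> column i W1 < 0 \<longrightarrow> D i n = 0) \<and>
            (X $ n \<bullet> column i W1 = 0 \<longrightarrow> D i n \<in> {0, 1})) \<and>
     (\<forall>i. column i W1 = (w2 $ i) *\<^sub>R (transpose X *v (\<chi> n. D i n * lam $ n)))"

end

theory Submission
  imports Defs
begin

text \<open>For a neuron with \<open>w\<^sub>2\<^sub>,\<^sub>i \<noteq> 0\<close>, stationarity says \<open>w\<^sub>1\<^sub>,\<^sub>i = w\<^sub>2\<^sub>,\<^sub>i g\<^sub>i\<close> with
  \<open>g\<^sub>i = X\<^sup>T D\<^sub>i \<lambda>\<close>; since \<open>D\<^sub>i\<close> is the activation pattern of \<open>w\<^sub>1\<^sub>,\<^sub>i\<close>, also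
  \<open>\<langle>g\<^sub>i, w\<^sub>1\<^sub>,\<^sub>i\<rangle> = ((X w\<^sub>1\<^sub>,\<^sub>i)\<^sub>+)\<^sup>T \<lambda> = w\<^sub>2\<^sub>,\<^sub>i\<close>, which forces \<open>\<parallel>g\<^sub>i\<parallel> = 1\<close>.
  Given \<open>\<parallel>u\<parallel> \<le> 1\<close>, spike-freeness writes \<open>(Xu)\<^sub>+ = Xz\<close> with \<open>\<parallel>z\<parallel> \<le> 1\<close>.
  As \<open>(Xu)\<^sub>+ \<ge> 0\<close> and \<open>\<lambda>\<close> has the sign of \<open>y\<close>, masking \<open>\<lambda>\<close> by \<open>D\<^sub>i\<^sub>+\<close> can only
  increase \<open>\<lambda>\<^sup>T(Xu)\<^sub>+\<close> and masking by \<open>D\<^sub>i\<^sub>-\<close> can only decrease it, while both masked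
  values equal \<open>\<langle>g\<^sub>i\<^sub>\<plusminus>, z\<rangle>\<close> and are bounded in absolute value by 1 (Cauchy-Schwarz).\<close>

lemma relu_vec_nonneg: "0 \<le> relu_vec v $ k"
  by (simp add: relu_vec_def)

lemma relu_mat_mult_column:
  "relu_mat (X ** W) $ n $ i = max 0 (X $ n \<bullet> column i W)"
  by (simp add: relu_mat_def matrix_matrix_mult_def column_def inner_vec_def)

lemma KKT_point_activation:
  assumes "KKT_point X y W1 w2 lam D"
  shows "D i n \<in> {0, 1}" and "D i n * (X $ n \<bullet> column i W1) = max 0 (X $ n \<bullet> column i W1)"
proof -
  have "(X $ n \<bullet> column i W1 > 0 \<longrightarrow> D i n = 1) \<and> (X $ n \<bullet> column i W1 < 0 \<longrightarrow> D i n = 0) \<and>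
        (X $ n \<bullet> column i W1 = 0 \<longrightarrow> D i n \<in> {0, 1})"
    using assms unfolding KKT_point_def by blast
  then show "D i n \<in> {0, 1}" and "D i n * (X $ n \<bullet> column i W1) = max 0 (X $ n \<bullet> column i W1)"
    by (cases "X $ n \<bullet> column i W1" "0::real" rule: linorder_cases; auto)+
qed

lemma KKT_point_neuron_gradient_norm:
  assumes kkt: "KKT_point X y W1 w2 lam D" and nz: "w2 $ i \<noteq> 0"
  shows "norm (transpose X *v (\<chi> n. D i n * lam $ n)) = 1"
proof -
  define c where "c = column i W1"
  define g where "g = transpose X *v (\<chi> n. D i n * lam $ n)"
  have c_eq: "c = w2 $ i *\<^sub>R g"
    using kkt unfolding KKT_point_def c_def g_def by blast
  have "w2 $ i = (\<Sum>n\<in>UNIV. relu_mat (X ** W1) $ n $ i * lam $ n)"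
    using kkt unfolding KKT_point_def by (simp add: matrix_vector_mult_def transpose_def)
  also have "\<dots> = (\<Sum>n\<in>UNIV. D i n * lam $ n * (X $ n \<bullet> c))"
    unfolding relu_mat_mult_column c_def KKT_point_activation(2)[OF kkt, symmetric]
    by (simp add: algebra_simps)
  also have "\<dots> = (\<chi> n. D i n * lam $ n) \<bullet> (X *v c)"
    by (simp add: inner_vec_def matrix_mult_dot)
  also have "\<dots> = g \<bullet> c"
    unfolding g_def by (simp add: dot_lmul_matrix)
  finally have "w2 $ i * w2 $ i = w2 $ i * w2 $ i * (g \<bullet> g)"
    by (simp add: c_eq)
  with nz have "g \<bullet> g = 1" by simp
  then show ?thesis unfolding g_def by (simp add: norm_eq_sqrt_inner)
qed

lemma inner_le_inner_mask:
  fixes lam v :: "real^'n"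
  assumes "\<And>n. 0 \<le> v $ n" and "\<And>n. 0 \<le> d n \<and> d n \<le> 1" and "\<And>n. 0 < lam $ n \<Longrightarrow> d n = 1"
  shows "lam \<bullet> v \<le> (\<chi> n. d n * lam $ n) \<bullet> v"
  unfolding inner_vec_def
proof (rule sum_mono)
  fix n
  have "(1 - d n) * (lam $ n * v $ n) \<le> 0"
  proof (cases "0 < lam $ n")
    case False
    then have "lam $ n * v $ n \<le> 0"
      using assms(1) by (simp add: mult_nonpos_nonneg)
    then show ?thesis
      using assms(2)[of n] mult_nonneg_nonpos[of "1 - d n" "lam $ n * v $ n"] by simp
  qed (simp add: assms(3))
  then show "lam $ n \<bullet> v $ n \<le> (\<chi> n. d n * lam $ n) $ n \<bullet> v $ n"
    by (simp add: algebra_simps)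
qed

lemma inner_mask_le_inner:
  fixes lam v :: "real^'n"
  assumes "\<And>n. 0 \<le> v $ n" and "\<And>n. 0 \<le> d n \<and> d n \<le> 1" and "\<And>n. lam $ n < 0 \<Longrightarrow> d n = 1"
  shows "(\<chi> n. d n * lam $ n) \<bullet> v \<le> lam \<bullet> v"
proof -
  have "(\<chi> n. d n * (- lam) $ n) = - (\<chi> n. d n * lam $ n)"
    by (vector algebra_simps)
  then show ?thesis
    using inner_le_inner_mask[of v d "- lam"] assms by (simp add: inner_minus_left)
qed

lemma abs_inner_range_le_1:
  fixes X :: "real^'d^'n"
  assumes "norm (transpose X *v a) \<le> 1" and "norm z \<le> 1"
  shows "\<bar>a \<bullet> (X *v z)\<bar> \<le> 1"
proof -
  have "\<bar>a \<bullet> (X *v z)\<bar> = \<bar>(transpose X *v a) \<bullet> z\<bar>"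
    by (simp add: dot_lmul_matrix)
  also have "\<dots> \<le> norm (transpose X *v a) * norm z"
    by (rule Cauchy_Schwarz_ineq2)
  also have "\<dots> \<le> 1"
    using assms by (simp add: mult_le_one)
  finally show ?thesis .
qed

theorem proposition5:
  fixes X :: "real^'d^'n" and y :: "'n \<Rightarrow> real"
    and W1 :: "real^'m^'d" and w2 :: "real^'m" and lam :: "real^'n"
    and D :: "'m \<Rightarrow> 'n \<Rightarrow> real" and ip im :: 'm
  assumes y_pm: "\<forall>n. y n = 1 \<or> y n = -1"
    and sf: "spike_free X"
    and kkt: "KKT_point X y W1 w2 lam D"
    and ip_nz: "w2 $ ip \<noteq> 0" and im_nz: "w2 $ im \<noteq> 0"
    and Dp: "\<forall>n. D ip n \<ge> (if y n = 1 then 1 else 0)"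
    and Dm: "\<forall>n. D im n \<ge> (if y n = -1 then 1 else 0)"
  shows "\<forall>u::real^'d. norm u \<le> 1 \<longrightarrow> \<bar>lam \<bullet> relu_vec (X *v u)\<bar> \<le> 1"
proof (intro allI impI)
  fix u :: "real^'d" assume "norm u \<le> 1"
  then obtain z where z: "norm z \<le> 1" and relu_eq: "relu_vec (X *v u) = X *v z"
    using sf unfolding spike_free_def by blast
  have v_nonneg: "0 \<le> (X *v z) $ n" for n
    using relu_vec_nonneg[of "X *v u" n] by (simp add: relu_eq)
  have D_unit: "0 \<le> D i n \<and> D i n \<le> 1" for i n
    using KKT_point_activation(1)[OF kkt, of i n] by auto
  have sign: "0 \<le> y n * lam $ n" for n
    using kkt unfolding KKT_point_def by blast
  have ip_active: "D ip n = 1" if "0 < lam $ n" for n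
  proof -
    have "y n = 1" using sign[of n] y_pm that by (metis mult_minus1 neg_0_le_iff_le not_le)
    then show ?thesis using Dp D_unit[of ip n] by (metis order_antisym)
  qed
  have upper: "lam \<bullet> (X *v z) \<le> (\<chi> n. D ip n * lam $ n) \<bullet> (X *v z)"
    by (rule inner_le_inner_mask[OF v_nonneg D_unit ip_active])
  have im_active: "D im n = 1" if "lam $ n < 0" for n
  proof -
    have "y n = -1" using sign[of n] y_pm that by (metis mult_1 not_le)
    then show ?thesis using Dm D_unit[of im n] by (metis order_antisym)
  qed
  have lower: "(\<chi> n. D im n * lam $ n) \<bullet> (X *v z) \<le> lam \<bullet> (X *v z)"
    by (rule inner_mask_le_inner[OF v_nonneg D_unit im_active])
  have "\<bar>(\<chi> n. D i n * lam $ n) \<bullet> (X *v z)\<bar> \<le> 1" if "w2 $ i \<noteq> 0" for i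
    using KKT_point_neuron_gradient_norm[OF kkt that] z by (intro abs_inner_range_le_1) simp_all
  from this[OF ip_nz] this[OF im_nz] upper lower
  show "\<bar>lam \<bullet> relu_vec (X *v u)\<bar> \<le> 1"
    unfolding relu_eq by linarith
qed

end
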